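(* If $n=6$, then $\Gamma^3=\mathrm{Q}$ and $\Gamma^1\neq\Gamma^3$. For instance, $T=e+2e_{123456}$ satisfies $T\in\Gamma^3$ and $T\notin\Gamma^1$.
   Context: Let $\mathrm{C}$ be either the real Clifford algebra $C\ell_{p,q}$ with $p+q=n$, or the complex Clifford algebra $C\ell(\mathbb{C}^n)$. It has identity $e$ and generators $e_1,\dots,e_n$ satisfying $e_ae_b+e_be_a=2\eta_{ab}e$. In the real case $\eta=\mathrm{diag}(1,\dots,1,-1,\dots,-1)$ with $p$ entries $+1$ and $q$ entries $-1$. In the complex case $\eta=I_n$. For $a_1<\dots<a_k$ write $e_{a_1\dots a_k}=e_{a_1}\cdots e_{a_k}$. $\mathrm{C}^k$ is the grade-$k$ subspace, spanned by the $e_{a_1\dots a_k}$ with $k$ indices. The even subspace is $\mathrm{C}^{(0)}=\bigoplus_{k\text{ even}}\mathrm{C}^k$ and the odd subspace is $\mathrm{C}^{(1)}=\bigoplus_{k\text{ odd}}\mathrm{C}^k$. The reversion $U\mapsto\tilde U$ is the linear anti-automorphism acting on $\mathrm{C}^k$ as $(-1)^{k(k-1)/2}$. For $S\subseteq\mathrm{C}$, $S^\times$ is the set of elements of $S$ invertible in $\mathrm{C}$, and $\mathrm{C}^{\times(j)}:=(\mathrm{C}^{(j)})^\times$. $\mathrm{Z}$ is the center: $\mathrm{Z}=\mathrm{C}^0$ for $n$ even and $\mathrm{Z}=\mathrm{C}^0\oplus\mathrm{C}^n$ for $n$ odd. Define: <ul> <li>$\Gamma^k=\{T\in\mathrm{C}^\times: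 T\,\mathrm{C}^k\,T^{-1}\subseteq\mathrm{C}^k\}$;</li> <li>$\mathrm{P}:=\mathrm{Z}^\times(\mathrm{C}^{\times(0)}\cup\mathrm{C}^{\times(1)})=\{WT: W\in\mathrm{Z}^\times, T\in\mathrm{C}^{\times(0)}\cup\mathrm{C}^{\times(1)}\}$;</li> <li>$\mathrm{Q}:=\{T\in\mathrm{P}:\tilde TT\in\mathrm{Z}^\times\}$.</li> </ul> *)

theory Defs
  imports Complex_Main
begin

text \<open>Elements of a Clifford algebra on generators e_0,...,e_(n-1) (0-based indices;
  e_{a1...ak} with a1<...<ak corresponds to the index set {a1,...,ak})
  are coefficient functions on index sets, supported on subsets of {..<n}.
  The diagonal metric is eta :: nat => 'a (eta i = eta_ii).\<close>

type_synonym 'a clf = "nat set \<Rightarrow> 'a"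

definition cl_carrier :: "nat \<Rightarrow> 'a::zero clf set" where
  "cl_carrier n = {f. \<forall>A. f A \<noteq> 0 \<longrightarrow> A \<subseteq> {..<n}}"

definition cl_one :: "'a::{zero,one} clf" where
  "cl_one = (\<lambda>A. if A = {} then 1 else 0)"

definition cl_blade :: "nat set \<Rightarrow> 'a::{zero,one} clf" where
  "cl_blade S = (\<lambda>A. if A = S then 1 else 0)"

definition cl_add :: "'a::plus clf \<Rightarrow> 'a clf \<Rightarrow> 'a clf" where
  "cl_add x y = (\<lambda>A. x A + y A)"

definition cl_smul :: "'a::times \<Rightarrow> 'a clf \<Rightarrow> 'a clf" where
  "cl_smul c x = (\<lambda>A. c * x A)"

text \<open>Sign in e_A e_C = sign * (prod_{k in A cap C} eta k) * e_{A symdiff C}.\<close>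
definition blade_sign :: "nat set \<Rightarrow> nat set \<Rightarrow> 'a::comm_ring_1" where
  "blade_sign A C = (-1) ^ card {(i, j). i \<in> A \<and> j \<in> C \<and> j < i}"

definition cl_mult :: "nat \<Rightarrow> (nat \<Rightarrow> 'a::comm_ring_1) \<Rightarrow> 'a clf \<Rightarrow> 'a clf \<Rightarrow> 'a clf" where
  "cl_mult n \<eta> x y = (\<lambda>B. \<Sum>A\<in>Pow {..<n}. \<Sum>C\<in>Pow {..<n}.
      if (A - C) \<union> (C - A) = B
      then blade_sign A C * (\<Prod>k\<in>A \<inter> C. \<eta> k) * x A * y C else 0)"

definition cl_units :: "nat \<Rightarrow> (nat \<Rightarrow> 'a::comm_ring_1) \<Rightarrow> 'a clf set" where
  "cl_units n \<eta> = {x \<in> cl_carrier n. \<exists>y \<in> cl_carrier n.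
      cl_mult n \<eta> x y = cl_one \<and> cl_mult n \<eta> y x = cl_one}"

definition cl_inv :: "nat \<Rightarrow> (nat \<Rightarrow> 'a::comm_ring_1) \<Rightarrow> 'a clf \<Rightarrow> 'a clf" where
  "cl_inv n \<eta> x = (SOME y. y \<in> cl_carrier n \<and>
      cl_mult n \<eta> x y = cl_one \<and> cl_mult n \<eta> y x = cl_one)"

definition cl_grade :: "nat \<Rightarrow> nat \<Rightarrow> 'a::zero clf set" where
  "cl_grade n k = {f \<in> cl_carrier n. \<forall>A. f A \<noteq> 0 \<longrightarrow> card A = k}"

definition cl_even :: "nat \<Rightarrow> 'a::zero clf set" where
  "cl_even n = {f \<in> cl_carrier n. \<forall>A. f A \<noteq> 0 \<longrightarrow> even (card A)}"

definition cl_odd :: "nat \<Rightarrow> 'a::zero clf set" where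
  "cl_odd n = {f \<in> cl_carrier n. \<forall>A. f A \<noteq> 0 \<longrightarrow> odd (card A)}"

definition cl_rev :: "'a::comm_ring_1 clf \<Rightarrow> 'a clf" where
  "cl_rev f = (\<lambda>A. (-1) ^ (card A * (card A - 1) div 2) * f A)"

definition cl_center :: "nat \<Rightarrow> 'a::comm_ring_1 clf set" where
  "cl_center n = (if even n then cl_grade n 0
     else {cl_add a b | a b. a \<in> cl_grade n 0 \<and> b \<in> cl_grade n n})"

definition cl_Gamma :: "nat \<Rightarrow> (nat \<Rightarrow> 'a::comm_ring_1) \<Rightarrow> nat \<Rightarrow> 'a clf set" where
  "cl_Gamma n \<eta> k = {T \<in> cl_units n \<eta>. \<forall>U \<in> cl_grade n k.
      cl_mult n \<eta> (cl_mult n \<eta> T U) (cl_inv n \<eta> T) \<in> cl_grade n k}"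

definition cl_P :: "nat \<Rightarrow> (nat \<Rightarrow> 'a::comm_ring_1) \<Rightarrow> 'a clf set" where
  "cl_P n \<eta> = {cl_mult n \<eta> W T | W T. W \<in> cl_units n \<eta> \<inter> cl_center n \<and>
      T \<in> (cl_units n \<eta> \<inter> cl_even n) \<union> (cl_units n \<eta> \<inter> cl_odd n)}"

definition cl_Q :: "nat \<Rightarrow> (nat \<Rightarrow> 'a::comm_ring_1) \<Rightarrow> 'a clf set" where
  "cl_Q n \<eta> = {T \<in> cl_P n \<eta>. cl_mult n \<eta> (cl_rev T) T \<in> cl_units n \<eta> \<inter> cl_center n}"

definition sig_metric :: "nat \<Rightarrow> nat \<Rightarrow> nat \<Rightarrow> real" where
  "sig_metric p q i = (if i < p then 1 else if i < p + q then -1 else 0)"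

end

theory Submission
  imports Defs
begin

(*
  Conjugation by T in Gamma^3 maps trivectors to trivectors, on which the grade involution and
  the reversion both act as -1; hence it commutes with both involutions on all products of
  trivectors. For n >= 5 every generator e_i is a multiple of such a product, so the elements
  involute(T^-1) T and rev(T) T commute with all generators, and for even n they are scalars.
  The first makes T even or odd, the second is an invertible scalar: T lies in Q. Conversely, for
  T in Q the inverse of T is a multiple of rev(T), and U |-> T U rev(T) sends a trivector to an
  element on which both involutions act as -1; for n <= 6 these are exactly the trivectors.
  For T = 1 + 2 e_123456 the pseudoscalar squares to +-1 and is negated by reversion, so
  rev(T) T = 1 - 4 e_123456^2 is a nonzero scalar and T lies in Q; but the pseudoscalar
  anticommutes with e_1, so T e_1 T^-1 has a nonzero grade-5 part.
*)

lemma finite_of_subset_lessThan: "A \<subseteq> {..<n::nat} \<Longrightarrow> finite A"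
  by (meson finite_lessThan finite_subset)

section \<open>Signs of products of basis blades\<close>

definition inversion_sign :: "nat \<Rightarrow> nat \<Rightarrow> 'a::comm_ring_1" where
  "inversion_sign i j = (if j < i then -1 else 1)"

text \<open>\<^const>\<open>blade_sign\<close> written as a double product, which makes it multiplicative in
  each argument with respect to symmetric difference.\<close>
definition pair_sign :: "nat set \<Rightarrow> nat set \<Rightarrow> 'a::comm_ring_1" where
  "pair_sign A C = (\<Prod>i\<in>A. \<Prod>j\<in>C. inversion_sign i j)"

lemma blade_sign_eq_pair_sign:
  assumes "finite A" "finite C"
  shows "blade_sign A C = (pair_sign A C :: 'a::comm_ring_1)"
proof -
  have pairs: "{(i, j). i \<in> A \<and> j \<in> C \<and> j < i} = (SIGMA i:A. {j\<in>C. j < i})" by auto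
  have row: "(\<Prod>j\<in>C. inversion_sign i j) = (-1::'a) ^ card {j\<in>C. j < i}" for i
  proof -
    have "(\<Prod>j\<in>C. inversion_sign i j) = (\<Prod>j\<in>C \<inter> {j. j < i}. (-1::'a)) * (\<Prod>j\<in>C \<inter> - {j. j < i}. 1)"
      unfolding inversion_sign_def using assms(2) by (rule prod.If_cases)
    also have "C \<inter> {j. j < i} = {j\<in>C. j < i}" by auto
    finally show ?thesis by simp
  qed
  show ?thesis
    unfolding blade_sign_def pair_sign_def pairs row using assms by (simp add: power_sum)
qed

lemma prod_sym_diff:
  fixes g :: "'b \<Rightarrow> 'a::comm_ring_1"
  assumes "finite A" "finite C" and g: "\<And>i. g i * g i = 1"
  shows "prod g (sym_diff A C) = prod g A * prod g C"
proof -
  have A: "prod g A = prod g (A - C) * prod g (A \<inter> C)"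
    using prod.subset_diff[of "A \<inter> C" A g] assms(1) by (simp add: Diff_Int)
  have C: "prod g C = prod g (C - A) * prod g (A \<inter> C)"
    using prod.subset_diff[of "A \<inter> C" C g] assms(2) by (simp add: Diff_Int Int_commute)
  have "prod g (sym_diff A C) = prod g (A - C) * prod g (C - A)"
    using assms by (intro prod.union_disjoint) auto
  moreover have "prod g (A \<inter> C) * prod g (A \<inter> C) = 1"
    using g by (simp add: prod.distrib[symmetric])
  ultimately show ?thesis
    unfolding A C by (metis (no_types, lifting) mult.assoc mult.commute mult_1_right)
qed

lemma prod_square_eq_1:
  fixes f :: "nat \<Rightarrow> 'a::comm_ring_1"
  assumes "\<And>j. f j * f j = 1"
  shows "prod f X * prod f X = 1"
  using assms by (simp add: prod.distrib[symmetric])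

lemma inversion_sign_square: "inversion_sign i j * inversion_sign i j = (1::'a::comm_ring_1)"
  by (simp add: inversion_sign_def)

lemma pair_sign_square: "pair_sign A C * pair_sign A C = (1::'a::comm_ring_1)"
  unfolding pair_sign_def by (intro prod_square_eq_1 inversion_sign_square)

lemma pair_sign_sym_diff_left:
  assumes "finite A" "finite C"
  shows "pair_sign (sym_diff A C) E = (pair_sign A E * pair_sign C E :: 'a::comm_ring_1)"
  unfolding pair_sign_def by (intro prod_sym_diff assms prod_square_eq_1 inversion_sign_square)

lemma pair_sign_sym_diff_right:
  assumes "finite C" "finite E"
  shows "pair_sign A (sym_diff C E) = (pair_sign A C * pair_sign A E :: 'a::comm_ring_1)"
  unfolding pair_sign_def prod.distrib[symmetric]
  by (intro prod.cong refl prod_sym_diff assms inversion_sign_square)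

lemma minus_one_power_card_sym_diff:
  fixes A C :: "'b set"
  assumes "finite A" "finite C"
  shows "(-1::'a::comm_ring_1) ^ card (sym_diff A C) = (-1) ^ card A * (-1) ^ card C"
  using prod_sym_diff[OF assms, of "\<lambda>_. -1::'a"] by simp

lemma card_ordered_pairs:
  fixes A :: "nat set"
  assumes "finite A"
  shows "card {(i, j). i \<in> A \<and> j \<in> A \<and> j < i} = card A * (card A - 1) div 2"
proof -
  let ?L = "{(i, j). i \<in> A \<and> j \<in> A \<and> j < i}"
  let ?U = "{(i, j). i \<in> A \<and> j \<in> A \<and> i < j}"
  let ?D = "{(i, j). i \<in> A \<and> j \<in> A \<and> i = j}"
  have fin: "finite ?L" "finite ?U" "finite ?D"
    by (rule finite_subset[of _ "A \<times> A"]; use assms in auto)+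
  have "A \<times> A = (?L \<union> ?U) \<union> ?D"
  proof (rule set_eqI)
    fix x :: "nat \<times> nat"
    obtain a b where x: "x = (a, b)" by fastforce
    have "a < b \<or> b < a \<or> a = b" by linarith
    thus "x \<in> A \<times> A \<longleftrightarrow> x \<in> (?L \<union> ?U) \<union> ?D" unfolding x by auto
  qed
  hence "card (A \<times> A) = card ?L + card ?U + card ?D"
    using fin by (simp add: card_Un_disjoint disjoint_iff)
  also have "?U = prod.swap ` ?L" by auto
  also have "card \<dots> = card ?L" by (rule card_image) (simp add: inj_on_def)
  also have "?D = (\<lambda>i. (i, i)) ` A" by auto
  also have "card \<dots> = card A" by (rule card_image) (simp add: inj_on_def)
  finally have "card A * card A = 2 * card ?L + card A" by (simp add: card_cartesian_product)
  hence "card A * (card A - 1) = 2 * card ?L" by (simp add: diff_mult_distrib2)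
  thus ?thesis by simp
qed

definition rev_sign :: "nat set \<Rightarrow> 'a::comm_ring_1" where
  "rev_sign A = (-1) ^ (card A * (card A - 1) div 2)"

lemma cl_rev_apply: "cl_rev x A = rev_sign A * x A"
  unfolding cl_rev_def rev_sign_def ..

lemma rev_sign_eq_pair_sign:
  assumes "finite A"
  shows "rev_sign A = pair_sign A A"
  using blade_sign_eq_pair_sign[OF assms assms] card_ordered_pairs[OF assms]
  unfolding blade_sign_def rev_sign_def by simp

lemma pair_sign_singleton_swap:
  assumes "finite A"
  shows "pair_sign A {i} * pair_sign {i} A = ((-1::'a::comm_ring_1) ^ card (A - {i}))"
proof -
  have "pair_sign A {i} * pair_sign {i} A = (\<Prod>a\<in>A. inversion_sign a i * (inversion_sign i a :: 'a))"
    unfolding pair_sign_def by (simp add: prod.distrib)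
  also have "\<dots> = (\<Prod>a\<in>A. if a = i then 1 else -1)"
    by (intro prod.cong refl) (auto simp: inversion_sign_def)
  also have "\<dots> = (-1) ^ card (A - {i})"
    using assms by (simp add: prod.If_cases Diff_eq Int_commute)
  finally show ?thesis .
qed

section \<open>The Clifford product\<close>

definition blade_coeff :: "(nat \<Rightarrow> 'a::comm_ring_1) \<Rightarrow> nat set \<Rightarrow> nat set \<Rightarrow> 'a" where
  "blade_coeff \<eta> A C = blade_sign A C * (\<Prod>k\<in>A \<inter> C. \<eta> k)"

lemma prod_Int_sym_diff_cocycle:
  assumes "finite A" "finite C" "finite E"
  shows "(\<Prod>k\<in>sym_diff A C \<inter> E. \<eta> k) * (\<Prod>k\<in>A \<inter> C. \<eta> k) =
         (\<Prod>k\<in>A \<inter> sym_diff C E. \<eta> k) * (\<Prod>k\<in>C \<inter> E. \<eta> k :: 'a::comm_monoid_mult)"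
proof -
  have "(\<Prod>k\<in>sym_diff A C \<inter> E. \<eta> k) * (\<Prod>k\<in>A \<inter> C. \<eta> k) = (\<Prod>k\<in>(sym_diff A C \<inter> E) \<union> (A \<inter> C). \<eta> k)"
    using assms by (intro prod.union_disjoint[symmetric]) auto
  also have "(sym_diff A C \<inter> E) \<union> (A \<inter> C) = (A \<inter> sym_diff C E) \<union> (C \<inter> E)" by auto
  also have "(\<Prod>k\<in>\<dots>. \<eta> k) = (\<Prod>k\<in>A \<inter> sym_diff C E. \<eta> k) * (\<Prod>k\<in>C \<inter> E. \<eta> k)"
    using assms by (intro prod.union_disjoint) auto
  finally show ?thesis .
qed

lemma blade_coeff_cocycle:
  assumes "finite A" "finite C" "finite E"
  shows "blade_coeff \<eta> (sym_diff A C) E * blade_coeff \<eta> A C =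
         blade_coeff \<eta> A (sym_diff C E) * (blade_coeff \<eta> C E :: 'a::comm_ring_1)"
proof -
  have fin: "finite (sym_diff A C)" "finite (sym_diff C E)" using assms by auto
  have "blade_coeff \<eta> (sym_diff A C) E * blade_coeff \<eta> A C =
      (pair_sign A E * pair_sign C E * pair_sign A C) *
      ((\<Prod>k\<in>sym_diff A C \<inter> E. \<eta> k) * (\<Prod>k\<in>A \<inter> C. \<eta> k))"
    unfolding blade_coeff_def blade_sign_eq_pair_sign[OF fin(1) assms(3)]
      blade_sign_eq_pair_sign[OF assms(1,2)] pair_sign_sym_diff_left[OF assms(1,2)]
    by (simp add: ac_simps)
  also have "\<dots> = (pair_sign A C * pair_sign A E * pair_sign C E) *
      ((\<Prod>k\<in>A \<inter> sym_diff C E. \<eta> k) * (\<Prod>k\<in>C \<inter> E. \<eta> k))"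
    unfolding prod_Int_sym_diff_cocycle[OF assms] by (simp add: ac_simps)
  also have "\<dots> = blade_coeff \<eta> A (sym_diff C E) * blade_coeff \<eta> C E"
    unfolding blade_coeff_def blade_sign_eq_pair_sign[OF assms(1) fin(2)]
      blade_sign_eq_pair_sign[OF assms(2,3)] pair_sign_sym_diff_right[OF assms(2,3)]
    by (simp add: ac_simps)
  finally show ?thesis .
qed

lemma blade_coeff_empty_left [simp]: "blade_coeff \<eta> {} C = 1"
  and blade_coeff_empty_right [simp]: "blade_coeff \<eta> A {} = 1"
  unfolding blade_coeff_def blade_sign_def by simp_all

lemma blade_coeff_nonzero:
  fixes \<eta> :: "nat \<Rightarrow> 'a::idom"
  assumes "finite A" "\<And>i. i \<in> A \<Longrightarrow> \<eta> i \<noteq> 0"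
  shows "blade_coeff \<eta> A C \<noteq> 0"
  unfolding blade_coeff_def blade_sign_def using assms by (auto simp: prod_zero_iff)

lemma cl_mult_eq:
  "cl_mult n \<eta> x y B = (\<Sum>A\<in>Pow {..<n}. \<Sum>C\<in>Pow {..<n}.
      if sym_diff A C = B then blade_coeff \<eta> A C * x A * y C else 0)"
  unfolding cl_mult_def blade_coeff_def by simp

text \<open>Since \<open>C \<mapsto> sym_diff A C\<close> is an involution, the double sum defining the product
  collapses to a convolution.\<close>
lemma cl_mult_apply:
  "cl_mult n \<eta> x y B = (if B \<subseteq> {..<n} then
     \<Sum>A\<in>Pow {..<n}. blade_coeff \<eta> A (sym_diff A B) * x A * y (sym_diff A B) else 0)"
proof (cases "B \<subseteq> {..<n}")
  case True
  have "(\<Sum>C\<in>Pow {..<n}. if sym_diff A C = B then blade_coeff \<eta> A C * x A * y C else 0) =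
        blade_coeff \<eta> A (sym_diff A B) * x A * y (sym_diff A B)" if A: "A \<in> Pow {..<n}" for A
  proof -
    have "sym_diff A C = B \<longleftrightarrow> sym_diff A B = C" for C by auto
    moreover have "sym_diff A B \<in> Pow {..<n}" using A True by auto
    ultimately show ?thesis by (simp only: sum.delta' finite_Pow_iff finite_lessThan if_True)
  qed
  thus ?thesis unfolding cl_mult_eq using True by simp
next
  case False
  hence "sym_diff A C \<noteq> B" if "A \<in> Pow {..<n}" "C \<in> Pow {..<n}" for A C
    using that by auto
  thus ?thesis unfolding cl_mult_eq using False by simp
qed

lemma cl_mult_carrier [simp]: "cl_mult n \<eta> x y \<in> cl_carrier n"
  unfolding cl_carrier_def by (auto simp: cl_mult_apply)

lemma sym_diff_sym_diff_cancel [simp]: "sym_diff A (sym_diff A C) = C"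
  by auto

lemma sum_sym_diff_reindex:
  assumes "A \<in> Pow {..<n}"
  shows "(\<Sum>D\<in>Pow {..<n}. f D) = (\<Sum>C\<in>Pow {..<n}. f (sym_diff A C))"
  by (rule sum.reindex_bij_witness[of _ "sym_diff A" "sym_diff A"]) (use assms in auto)

lemma cl_mult_assoc:
  "cl_mult n \<eta> (cl_mult n \<eta> x y) z = cl_mult n \<eta> x (cl_mult n \<eta> y z)"
proof
  fix B
  let ?P = "Pow {..<n}" and ?K = "blade_coeff \<eta>"
  show "cl_mult n \<eta> (cl_mult n \<eta> x y) z B = cl_mult n \<eta> x (cl_mult n \<eta> y z) B"
  proof (cases "B \<subseteq> {..<n}")
    case B: True
    have "cl_mult n \<eta> (cl_mult n \<eta> x y) z B = (\<Sum>D\<in>?P. \<Sum>A\<in>?P.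
        ?K D (sym_diff D B) * ?K A (sym_diff A D) * x A * y (sym_diff A D) * z (sym_diff D B))"
      using B by (simp add: cl_mult_apply sum_distrib_left sum_distrib_right ac_simps)
    also have "\<dots> = (\<Sum>A\<in>?P. \<Sum>D\<in>?P.
        ?K D (sym_diff D B) * ?K A (sym_diff A D) * x A * y (sym_diff A D) * z (sym_diff D B))"
      by (rule sum.swap)
    also have "\<dots> = (\<Sum>A\<in>?P. \<Sum>C\<in>?P. ?K (sym_diff A C) (sym_diff (sym_diff A C) B) * ?K A C
        * x A * y C * z (sym_diff (sym_diff A C) B))"
      by (rule sum.cong[OF refl], rule sum_sym_diff_reindex[THEN trans], assumption)
        (simp only: sym_diff_sym_diff_cancel)
    also have "\<dots> = (\<Sum>A\<in>?P. \<Sum>C\<in>?P. ?K A (sym_diff A B) * ?K C (sym_diff C (sym_diff A B))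
        * x A * y C * z (sym_diff C (sym_diff A B)))"
    proof (intro sum.cong refl)
      fix A C assume "A \<in> ?P" "C \<in> ?P"
      hence fin: "finite A" "finite C" "finite (sym_diff C (sym_diff A B))"
        using B by (auto intro: finite_of_subset_lessThan)
      have "sym_diff (sym_diff A C) B = sym_diff C (sym_diff A B)"
        "sym_diff C (sym_diff C (sym_diff A B)) = sym_diff A B" by auto
      with blade_coeff_cocycle[OF fin, of \<eta>] show "?K (sym_diff A C) (sym_diff (sym_diff A C) B)
          * ?K A C * x A * y C * z (sym_diff (sym_diff A C) B) = ?K A (sym_diff A B)
          * ?K C (sym_diff C (sym_diff A B)) * x A * y C * z (sym_diff C (sym_diff A B))"
        by simp
    qed
    also have "\<dots> = (\<Sum>A\<in>?P. ?K A (sym_diff A B) * x A * cl_mult n \<eta> y z (sym_diff A B))"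
    proof (rule sum.cong[OF refl])
      fix A assume "A \<in> ?P"
      hence "sym_diff A B \<subseteq> {..<n}" using B by auto
      thus "(\<Sum>C\<in>?P. ?K A (sym_diff A B) * ?K C (sym_diff C (sym_diff A B))
          * x A * y C * z (sym_diff C (sym_diff A B))) =
          ?K A (sym_diff A B) * x A * cl_mult n \<eta> y z (sym_diff A B)"
        by (simp only: cl_mult_apply if_True sum_distrib_left) (simp add: ac_simps)
    qed
    also have "\<dots> = cl_mult n \<eta> x (cl_mult n \<eta> y z) B"
      using B by (simp only: cl_mult_apply if_True)
    finally show ?thesis .
  qed (simp add: cl_mult_apply)
qed

lemma cl_carrier_iff: "x \<in> cl_carrier n \<longleftrightarrow> (\<forall>A. \<not> A \<subseteq> {..<n} \<longrightarrow> x A = 0)"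
  unfolding cl_carrier_def by auto

lemma cl_one_carrier [simp]: "cl_one \<in> cl_carrier n"
  unfolding cl_carrier_def cl_one_def by auto

lemma cl_blade_carrier [simp]: "A \<subseteq> {..<n} \<Longrightarrow> cl_blade A \<in> cl_carrier n"
  unfolding cl_carrier_def cl_blade_def by auto

lemma cl_smul_carrier [simp]: "x \<in> cl_carrier n \<Longrightarrow> cl_smul (c::'a::comm_ring_1) x \<in> cl_carrier n"
  unfolding cl_carrier_iff cl_smul_def by auto

lemma cl_add_carrier [simp]:
  "x \<in> cl_carrier n \<Longrightarrow> y \<in> cl_carrier n \<Longrightarrow> cl_add x (y::'a::comm_ring_1 clf) \<in> cl_carrier n"
  unfolding cl_carrier_iff cl_add_def by auto

lemma cl_rev_carrier [simp]: "x \<in> cl_carrier n \<Longrightarrow> cl_rev x \<in> cl_carrier n"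
  unfolding cl_carrier_iff cl_rev_def by auto

lemma cl_smul_smul [simp]: "cl_smul a (cl_smul b x) = cl_smul (a * b) (x :: 'a::comm_ring_1 clf)"
  unfolding cl_smul_def by (simp add: mult.assoc)

lemma cl_smul_one [simp]: "cl_smul 1 (x :: 'a::comm_ring_1 clf) = x"
  unfolding cl_smul_def by simp

lemma cl_smul_minus_one_cancel: "cl_smul (-1) x = cl_smul (-1) y \<Longrightarrow> x = (y :: 'a::comm_ring_1 clf)"
  unfolding cl_smul_def by (simp add: fun_eq_iff)

lemma cl_mult_one_left:
  assumes "x \<in> cl_carrier n"
  shows "cl_mult n \<eta> cl_one x = x"
proof
  fix B
  have "cl_mult n \<eta> cl_one x B = (if B \<subseteq> {..<n} then
      \<Sum>A\<in>Pow {..<n}. if A = {} then x B else 0 else 0)"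
    unfolding cl_mult_apply cl_one_def by (intro if_cong sum.cong refl) auto
  thus "cl_mult n \<eta> cl_one x B = x B" using assms unfolding cl_carrier_iff by auto
qed

lemma cl_mult_one_right:
  assumes "x \<in> cl_carrier n"
  shows "cl_mult n \<eta> x cl_one = x"
proof
  fix B
  have "sym_diff A B = {} \<longleftrightarrow> A = B" for A :: "nat set" by auto
  hence "cl_mult n \<eta> x cl_one B = (if B \<subseteq> {..<n} then
      \<Sum>A\<in>Pow {..<n}. if A = B then x B else 0 else 0)"
    unfolding cl_mult_apply cl_one_def by (intro if_cong sum.cong refl) auto
  thus "cl_mult n \<eta> x cl_one B = x B" using assms unfolding cl_carrier_iff by auto
qed

lemma cl_mult_smul_left: "cl_mult n \<eta> (cl_smul c x) y = cl_smul c (cl_mult n \<eta> x y)"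
  and cl_mult_smul_right: "cl_mult n \<eta> x (cl_smul c y) = cl_smul c (cl_mult n \<eta> x y)"
  by (rule ext, simp add: cl_smul_def cl_mult_apply sum_distrib_left ac_simps)+

lemma cl_mult_add_left: "cl_mult n \<eta> (cl_add x y) z = cl_add (cl_mult n \<eta> x z) (cl_mult n \<eta> y z)"
  and cl_mult_add_right: "cl_mult n \<eta> x (cl_add y z) = cl_add (cl_mult n \<eta> x y) (cl_mult n \<eta> x z)"
  by (rule ext, simp add: cl_add_def cl_mult_apply sum.distrib distrib_left distrib_right)+

lemma sum_Pow_times_blade:
  "A \<subseteq> {..<n} \<Longrightarrow> (\<Sum>A'\<in>Pow {..<n}. cl_blade A A' * f A') = (f A :: 'a::comm_ring_1)"
  unfolding cl_blade_def by (simp add: if_distrib[of "\<lambda>c. c * _"] cong: if_cong)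

lemma cl_mult_blade_left_apply:
  assumes "C \<subseteq> {..<n}"
  shows "cl_mult n \<eta> (cl_blade C) z B =
    (if B \<subseteq> {..<n} then blade_coeff \<eta> C (sym_diff C B) * z (sym_diff C B) else 0)"
proof -
  have "(\<Sum>A\<in>Pow {..<n}. blade_coeff \<eta> A (sym_diff A B) * cl_blade C A * z (sym_diff A B)) =
      (\<Sum>A\<in>Pow {..<n}. cl_blade C A * (blade_coeff \<eta> A (sym_diff A B) * z (sym_diff A B)))"
    by (simp only: mult_ac)
  thus ?thesis by (simp only: cl_mult_apply sum_Pow_times_blade[OF assms])
qed

lemma cl_mult_blade_right_apply:
  assumes "C \<subseteq> {..<n}"
  shows "cl_mult n \<eta> z (cl_blade C) B =
    (if B \<subseteq> {..<n} then blade_coeff \<eta> (sym_diff B C) C * z (sym_diff B C) else 0)"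
proof (cases "B \<subseteq> {..<n}")
  case True
  have "cl_mult n \<eta> z (cl_blade C) B =
      (\<Sum>A\<in>Pow {..<n}. cl_blade C (sym_diff B A) * (blade_coeff \<eta> A (sym_diff A B) * z A))"
    unfolding cl_mult_apply using True by (simp add: ac_simps Un_commute)
  also have "\<dots> = (\<Sum>A\<in>Pow {..<n}.
      cl_blade (sym_diff B C) A * (blade_coeff \<eta> A (sym_diff A B) * z A))"
    unfolding cl_blade_def by (intro sum.cong refl) auto
  also have "\<dots> = blade_coeff \<eta> (sym_diff B C) C * z (sym_diff B C)"
  proof -
    have "sym_diff (sym_diff B C) B = C" by auto
    thus ?thesis using True assms by (subst sum_Pow_times_blade) auto
  qed
  finally show ?thesis using True by simp
qed (simp add: cl_mult_apply)

lemma cl_mult_blade: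
  assumes "A \<subseteq> {..<n}" "C \<subseteq> {..<n}"
  shows "cl_mult n \<eta> (cl_blade A) (cl_blade C) =
    cl_smul (blade_coeff \<eta> A C) (cl_blade (sym_diff A C))"
proof
  fix B
  have "sym_diff A B = C \<longleftrightarrow> B = sym_diff A C" by auto
  moreover have "sym_diff A C \<subseteq> {..<n}" using assms by auto
  ultimately show "cl_mult n \<eta> (cl_blade A) (cl_blade C) B =
      cl_smul (blade_coeff \<eta> A C) (cl_blade (sym_diff A C)) B"
    unfolding cl_mult_blade_left_apply[OF assms(1)] by (auto simp: cl_blade_def cl_smul_def)
qed

section \<open>Grade involution and reversion\<close>

definition cl_involute :: "'a::comm_ring_1 clf \<Rightarrow> 'a clf" where
  "cl_involute x = (\<lambda>A. (-1) ^ card A * x A)"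

lemma cl_involute_mult:
  "cl_involute (cl_mult n \<eta> x y) = cl_mult n \<eta> (cl_involute x) (cl_involute y)"
proof
  fix B
  show "cl_involute (cl_mult n \<eta> x y) B = cl_mult n \<eta> (cl_involute x) (cl_involute y) B"
  proof (cases "B \<subseteq> {..<n}")
    case B: True
    have "(-1) ^ card B * (blade_coeff \<eta> A (sym_diff A B) * x A * y (sym_diff A B)) =
        blade_coeff \<eta> A (sym_diff A B) * ((-1) ^ card A * x A) *
        ((-1) ^ card (sym_diff A B) * (y (sym_diff A B) :: 'a))" if "A \<in> Pow {..<n}" for A
    proof -
      have "(-1) ^ card B = (-1) ^ card A * ((-1) ^ card (sym_diff A B) :: 'a)"
        using minus_one_power_card_sym_diff[of A "sym_diff A B"] that B
        by (simp add: finite_of_subset_lessThan)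
      thus ?thesis by (simp only: mult_ac)
    qed
    thus ?thesis unfolding cl_involute_def cl_mult_apply using B
      by (simp only: if_True sum_distrib_left) (rule sum.cong, simp_all)
  qed (simp add: cl_involute_def cl_mult_apply)
qed

lemma cl_involute_smul: "cl_involute (cl_smul c x) = cl_smul c (cl_involute x)"
  unfolding cl_involute_def cl_smul_def by (simp add: ac_simps)

lemma cl_involute_one [simp]: "cl_involute cl_one = cl_one"
  unfolding cl_involute_def cl_one_def by auto

lemma cl_involute_carrier [simp]: "x \<in> cl_carrier n \<Longrightarrow> cl_involute x \<in> cl_carrier n"
  unfolding cl_carrier_iff cl_involute_def by auto

lemma cl_involute_rev: "cl_involute (cl_rev x) = cl_rev (cl_involute x)"
  unfolding cl_involute_def cl_rev_def by (simp add: ac_simps)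

lemma cl_involute_blade_singleton: "cl_involute (cl_blade {i}) = cl_smul (-1) (cl_blade {i})"
  unfolding cl_involute_def cl_blade_def cl_smul_def by auto

lemma blade_coeff_reverse:
  assumes "finite A" "finite C"
  shows "rev_sign (sym_diff A C) * blade_coeff \<eta> A C =
         rev_sign A * rev_sign C * (blade_coeff \<eta> C A :: 'a::comm_ring_1)"
proof -
  have fin: "finite (sym_diff A C)" using assms by auto
  have "rev_sign (sym_diff A C) * pair_sign A C =
      (pair_sign A A * pair_sign C A * pair_sign C C) * (pair_sign A C * pair_sign A C :: 'a)"
    unfolding rev_sign_eq_pair_sign[OF fin] pair_sign_sym_diff_left[OF assms]
      pair_sign_sym_diff_right[OF assms]
    by (simp add: ac_simps)
  also have "\<dots> = rev_sign A * rev_sign C * pair_sign C A"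
    unfolding pair_sign_square rev_sign_eq_pair_sign[OF assms(1)]
      rev_sign_eq_pair_sign[OF assms(2)] by (simp add: ac_simps)
  finally show ?thesis
    unfolding blade_coeff_def blade_sign_eq_pair_sign[OF assms]
      blade_sign_eq_pair_sign[OF assms(2,1)]
    by (simp add: Int_commute mult.assoc[symmetric])
qed

lemma cl_rev_mult: "cl_rev (cl_mult n \<eta> x y) = cl_mult n \<eta> (cl_rev y) (cl_rev x)"
proof
  fix B
  show "cl_rev (cl_mult n \<eta> x y) B = cl_mult n \<eta> (cl_rev y) (cl_rev x) B"
  proof (cases "B \<subseteq> {..<n}")
    case B: True
    let ?K = "blade_coeff \<eta>"
    have "cl_mult n \<eta> (cl_rev y) (cl_rev x) B = (\<Sum>A\<in>Pow {..<n}.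
        ?K (sym_diff B A) (sym_diff (sym_diff B A) B)
        * cl_rev y (sym_diff B A) * cl_rev x (sym_diff (sym_diff B A) B))"
      unfolding cl_mult_apply using B by (simp only: if_True) (rule sum_sym_diff_reindex, simp)
    also have "\<dots> = (\<Sum>A\<in>Pow {..<n}. rev_sign B * (?K A (sym_diff A B) * x A * y (sym_diff A B)))"
    proof (rule sum.cong[OF refl])
      fix A assume "A \<in> Pow {..<n}"
      hence fin: "finite A" "finite (sym_diff A B)"
        using B by (auto intro: finite_of_subset_lessThan)
      have sd: "sym_diff (sym_diff B A) B = A" "sym_diff B A = sym_diff A B"
        "sym_diff A (sym_diff A B) = B" "sym_diff (sym_diff A B) B = A" by auto
      have "?K (sym_diff B A) (sym_diff (sym_diff B A) B) * cl_rev y (sym_diff B A)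
          * cl_rev x (sym_diff (sym_diff B A) B) =
          x A * y (sym_diff A B) * (rev_sign A * rev_sign (sym_diff A B) * ?K (sym_diff A B) A)"
        unfolding sd cl_rev_apply by (simp only: mult_ac)
      also have "\<dots> = x A * y (sym_diff A B) * (rev_sign B * ?K A (sym_diff A B))"
        using blade_coeff_reverse[OF fin, of \<eta>] unfolding sd by simp
      finally show "?K (sym_diff B A) (sym_diff (sym_diff B A) B) * cl_rev y (sym_diff B A)
          * cl_rev x (sym_diff (sym_diff B A) B)
          = rev_sign B * (?K A (sym_diff A B) * x A * y (sym_diff A B))"
        by (simp only: mult_ac)
    qed
    also have "\<dots> = cl_rev (cl_mult n \<eta> x y) B"
      unfolding cl_rev_apply cl_mult_apply using B by (simp add: sum_distrib_left)
    finally show ?thesis ..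
  qed (simp add: cl_rev_apply cl_mult_apply)
qed

lemma cl_rev_rev [simp]: "cl_rev (cl_rev x) = x"
  unfolding cl_rev_def by (simp flip: power_mult_distrib)

lemma cl_rev_smul: "cl_rev (cl_smul c x) = cl_smul c (cl_rev x)"
  unfolding cl_rev_def cl_smul_def by (simp add: ac_simps)

lemma cl_rev_add: "cl_rev (cl_add x y) = cl_add (cl_rev x) (cl_rev y)"
  unfolding cl_rev_def cl_add_def by (simp add: distrib_left)

lemma cl_rev_one [simp]: "cl_rev cl_one = cl_one"
  unfolding cl_rev_def cl_one_def by auto

lemma cl_rev_blade_singleton: "cl_rev (cl_blade {i}) = cl_blade {i}"
  unfolding cl_rev_def cl_blade_def by auto

lemma cl_unitsI:
  assumes "x \<in> cl_carrier n" "y \<in> cl_carrier n"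
    and "cl_mult n \<eta> x y = cl_one" "cl_mult n \<eta> y x = cl_one"
  shows "x \<in> cl_units n \<eta>"
  unfolding cl_units_def using assms by auto

lemma cl_units_carrier: "x \<in> cl_units n \<eta> \<Longrightarrow> x \<in> cl_carrier n"
  unfolding cl_units_def by auto

lemma cl_inv:
  assumes "x \<in> cl_units n \<eta>"
  shows cl_inv_carrier: "cl_inv n \<eta> x \<in> cl_carrier n"
    and cl_mult_inv_right: "cl_mult n \<eta> x (cl_inv n \<eta> x) = cl_one"
    and cl_mult_inv_left: "cl_mult n \<eta> (cl_inv n \<eta> x) x = cl_one"
proof -
  let ?P = "\<lambda>y. y \<in> cl_carrier n \<and> cl_mult n \<eta> x y = cl_one \<and> cl_mult n \<eta> y x = cl_one"
  have "\<exists>y. ?P y" using assms unfolding cl_units_def by blast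
  hence "?P (cl_inv n \<eta> x)" unfolding cl_inv_def by (rule someI_ex)
  thus "cl_inv n \<eta> x \<in> cl_carrier n" "cl_mult n \<eta> x (cl_inv n \<eta> x) = cl_one"
    "cl_mult n \<eta> (cl_inv n \<eta> x) x = cl_one" by auto
qed

lemma cl_mult_cancel_left:
  "cl_mult n \<eta> y x = cl_one \<Longrightarrow> z \<in> cl_carrier n \<Longrightarrow> cl_mult n \<eta> y (cl_mult n \<eta> x z) = z"
  by (simp flip: cl_mult_assoc add: cl_mult_one_left)

lemma cl_inv_unique:
  assumes "x \<in> cl_units n \<eta>" "y \<in> cl_carrier n" "cl_mult n \<eta> x y = cl_one"
  shows "cl_inv n \<eta> x = y"
proof -
  have "cl_inv n \<eta> x = cl_mult n \<eta> (cl_inv n \<eta> x) cl_one"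
    using assms(1) by (simp add: cl_mult_one_right cl_inv_carrier)
  also have "\<dots> = y"
    using cl_mult_cancel_left[OF cl_mult_inv_left[OF assms(1)] assms(2)] assms(3) by simp
  finally show ?thesis .
qed

lemma cl_one_units: "cl_one \<in> cl_units n \<eta>"
  by (rule cl_unitsI[of _ _ cl_one]) (simp_all add: cl_mult_one_left)

lemma cl_mult_units:
  assumes x: "x \<in> cl_units n \<eta>" and y: "y \<in> cl_units n \<eta>"
  shows "cl_mult n \<eta> x y \<in> cl_units n \<eta>"
proof (rule cl_unitsI)
  let ?y' = "cl_inv n \<eta> y" and ?x' = "cl_inv n \<eta> x"
  show "cl_mult n \<eta> (cl_mult n \<eta> x y) (cl_mult n \<eta> ?y' ?x') = cl_one"
    using cl_mult_cancel_left[OF cl_mult_inv_right[OF y] cl_inv_carrier[OF x]]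
      cl_mult_inv_right[OF x]
    by (simp add: cl_mult_assoc)
  show "cl_mult n \<eta> (cl_mult n \<eta> ?y' ?x') (cl_mult n \<eta> x y) = cl_one"
    using cl_mult_cancel_left[OF cl_mult_inv_left[OF x] cl_units_carrier[OF y]]
      cl_mult_inv_left[OF y]
    by (simp add: cl_mult_assoc)
qed simp_all

lemma cl_rev_units:
  assumes "T \<in> cl_units n \<eta>"
  shows "cl_rev T \<in> cl_units n \<eta>"
  by (rule cl_unitsI[of _ _ "cl_rev (cl_inv n \<eta> T)"])
    (use assms in \<open>simp_all flip: cl_rev_mult add: cl_units_carrier cl_inv_carrier
      cl_mult_inv_left cl_mult_inv_right\<close>)

lemma cl_mult_zero_left: "cl_mult n \<eta> (\<lambda>_. 0) y = (\<lambda>_. 0)"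
  by (simp add: cl_mult_apply fun_eq_iff)

lemma cl_smul_one_units: "(c :: 'a::field) \<noteq> 0 \<Longrightarrow> cl_smul c cl_one \<in> cl_units n \<eta>"
  by (rule cl_unitsI[of _ _ "cl_smul (inverse c) cl_one"])
    (simp_all add: cl_mult_smul_left cl_mult_smul_right cl_mult_one_left)

lemma cl_units_nonzero:
  assumes "x \<in> cl_units n \<eta>"
  shows "x \<noteq> (\<lambda>_. 0)"
proof
  assume "x = (\<lambda>_. 0)"
  hence "cl_one = (\<lambda>_. 0 :: 'a)"
    using cl_mult_inv_right[OF assms] by (simp add: cl_mult_zero_left)
  thus False unfolding cl_one_def by (metis zero_neq_one)
qed


section \<open>Grades, the centre and products of trivectors\<close>

lemma cl_blade_grade: "A \<subseteq> {..<n} \<Longrightarrow> card A = k \<Longrightarrow> cl_blade A \<in> cl_grade n k"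
  unfolding cl_grade_def cl_blade_def cl_carrier_iff by auto

lemma cl_smul_grade: "x \<in> cl_grade n k \<Longrightarrow> cl_smul (c::'a::comm_ring_1) x \<in> cl_grade n k"
  unfolding cl_grade_def cl_smul_def cl_carrier_iff by auto (metis mult_zero_right)

lemma cl_one_grade0: "cl_one \<in> cl_grade n 0"
  unfolding cl_grade_def cl_one_def cl_carrier_iff by auto

lemma cl_grade0_eq_smul_one:
  assumes "x \<in> cl_grade n 0"
  shows "x = cl_smul (x {}) (cl_one :: 'a::comm_ring_1 clf)"
proof
  fix A
  have "A = {}" if "x A \<noteq> 0"
  proof -
    have "A \<subseteq> {..<n}" "card A = 0" using assms that unfolding cl_grade_def cl_carrier_iff by auto
    thus ?thesis using finite_of_subset_lessThan by auto
  qed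
  thus "x A = cl_smul (x {}) cl_one A" unfolding cl_smul_def cl_one_def by auto
qed

lemma cl_center_even: "even n \<Longrightarrow> cl_center n = cl_grade n 0"
  unfolding cl_center_def by simp

lemma scale_on_support:
  assumes "\<And>A. x A \<noteq> 0 \<Longrightarrow> f A = c"
  shows "(\<lambda>A. f A * x A) = (\<lambda>A. c * (x A :: 'a::comm_ring_1))"
  by (rule ext) (metis assms mult_zero_right)

lemma cl_involute_grade: "U \<in> cl_grade n k \<Longrightarrow> cl_involute U = cl_smul ((-1) ^ k) U"
  unfolding cl_involute_def cl_smul_def cl_grade_def by (rule scale_on_support) auto

lemma cl_rev_grade:
  "U \<in> cl_grade n k \<Longrightarrow> cl_rev U = cl_smul ((-1) ^ (k * (k - 1) div 2)) U"
  unfolding cl_rev_def cl_smul_def cl_grade_def by (rule scale_on_support) auto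

lemma cl_involute_even: "x \<in> cl_even n \<Longrightarrow> cl_involute x = x"
  unfolding cl_involute_def cl_even_def
  using scale_on_support[of x "\<lambda>A. (-1) ^ card A" 1] by auto

lemma cl_involute_odd: "x \<in> cl_odd n \<Longrightarrow> cl_involute x = cl_smul (-1) x"
  unfolding cl_involute_def cl_smul_def cl_odd_def by (rule scale_on_support) auto

lemma even_card_of_blade_coeff_singleton_commute:
  fixes \<eta> :: "nat \<Rightarrow> 'a::{idom,ring_char_0}"
  assumes "finite A" "\<eta> i \<noteq> 0" "blade_coeff \<eta> A {i} = blade_coeff \<eta> {i} A"
  shows "even (card (A - {i}))"
proof -
  have "(\<Prod>k\<in>A \<inter> {i}. \<eta> k) \<noteq> 0" using assms(2) by (cases "i \<in> A") auto
  hence "pair_sign A {i} = (pair_sign {i} A :: 'a)"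
    using assms(3) unfolding blade_coeff_def blade_sign_eq_pair_sign[OF assms(1)
      finite.insertI[OF finite.emptyI]]
      blade_sign_eq_pair_sign[OF finite.insertI[OF finite.emptyI] assms(1)]
    by (simp add: Int_commute) blast
  hence "pair_sign A {i} * pair_sign {i} A = (1 :: 'a)" by (simp add: pair_sign_square)
  thus ?thesis unfolding pair_sign_singleton_swap[OF assms(1)]
    by (simp add: minus_one_power_iff split: if_splits)
qed

text \<open>A basis blade \<open>e\<^sub>A\<close> commutes with \<open>e\<^sub>i\<close> exactly when \<open>card (A - {i})\<close> is even; for
  even \<open>n\<close> only the empty blade passes this test for every \<open>i\<close>.\<close>
lemma cl_grade0_of_commute_generators:
  fixes z :: "'a::{idom,ring_char_0} clf"
  assumes z: "z \<in> cl_carrier n" and n: "even n" and \<eta>: "\<And>i. i < n \<Longrightarrow> \<eta> i \<noteq> 0"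
    and comm: "\<And>i. i < n \<Longrightarrow> cl_mult n \<eta> z (cl_blade {i}) = cl_mult n \<eta> (cl_blade {i}) z"
  shows "z \<in> cl_grade n 0"
  unfolding cl_grade_def
proof (intro CollectI conjI allI impI z)
  fix A assume nz: "z A \<noteq> 0"
  hence A: "A \<subseteq> {..<n}" using z unfolding cl_carrier_iff by auto
  have even_card: "even (card (A - {i}))" if i: "i < n" for i
  proof (rule even_card_of_blade_coeff_singleton_commute)
    have "sym_diff A {i} \<subseteq> {..<n}" "sym_diff (sym_diff A {i}) {i} = A"
      "sym_diff {i} (sym_diff A {i}) = A"
      using A i by auto
    with fun_cong[OF comm[OF i], of "sym_diff A {i}"] nz
    show "blade_coeff \<eta> A {i} = blade_coeff \<eta> {i} A"
      using i by (simp add: cl_mult_blade_right_apply cl_mult_blade_left_apply)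
  qed (use A i \<eta> finite_of_subset_lessThan in auto)
  show "card A = 0"
  proof (rule ccontr)
    assume "card A \<noteq> 0"
    show False
    proof (cases "even (card A)")
      case True
      then obtain a where "a \<in> A" using \<open>card A \<noteq> 0\<close> by (metis card.empty ex_in_conv)
      with even_card[of a] A True finite_of_subset_lessThan[OF A] show False by auto
    next
      case False
      with n have "A \<noteq> {..<n}" by auto
      with A obtain i where "i < n" "i \<notin> A" by auto
      with even_card[of i] False show False by simp
    qed
  qed
qed

lemma cl_even_or_odd_of_eq_smul_involute:
  fixes x :: "'a::{idom,ring_char_0} clf"
  assumes x: "x \<in> cl_carrier n" "x \<noteq> (\<lambda>_. 0)" and eq: "x = cl_smul \<gamma> (cl_involute x)"
  shows "x \<in> cl_even n \<or> x \<in> cl_odd n"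
proof -
  have sign: "\<gamma> * (-1) ^ card A = 1" if "x A \<noteq> 0" for A
    using fun_cong[OF eq, of A] that unfolding cl_smul_def cl_involute_def
    by (metis mult.assoc mult_cancel_right1)
  obtain A0 where A0: "x A0 \<noteq> 0" using x(2) by auto
  have "even (card A) \<longleftrightarrow> even (card A0)" if "x A \<noteq> 0" for A
  proof -
    have "(-1::'a) ^ card A = (-1) ^ card A0"
      using sign[OF that] sign[OF A0] by (metis mult_cancel_left mult_zero_left zero_neq_one)
    thus ?thesis by (auto simp: minus_one_power_iff split: if_splits)
  qed
  thus ?thesis using x(1) unfolding cl_even_def cl_odd_def by (cases "even (card A0)") auto
qed

text \<open>Both involutions act as \<open>-1\<close> on grade \<open>k\<close> exactly when \<open>k mod 4 = 3\<close>, and the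
  next such grade after 3 is 7.\<close>
lemma cl_grade3_of_involute_rev:
  fixes x :: "'a::{idom,ring_char_0} clf"
  assumes n: "n \<le> 6" and x: "x \<in> cl_carrier n"
    and inv: "cl_involute x = cl_smul (-1) x" and rev: "cl_rev x = cl_smul (-1) x"
  shows "x \<in> cl_grade n 3"
  unfolding cl_grade_def
proof (intro CollectI conjI allI impI x)
  fix A assume nz: "x A \<noteq> 0"
  hence "A \<subseteq> {..<n}" using x unfolding cl_carrier_iff by auto
  hence "card A \<le> 6" using n by (metis card_lessThan card_mono finite_lessThan order.trans)
  hence "card A = 0 \<or> card A = 1 \<or> card A = 2 \<or> card A = 3 \<or> card A = 4 \<or> card A = 5 \<or> card A = 6"
    by auto
  moreover have "(-1) ^ card A * x A = -1 * x A"
    using fun_cong[OF inv, of A] unfolding cl_involute_def cl_smul_def by simp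
  hence "(-1::'a) ^ card A = -1" using nz by (metis mult_right_cancel)
  moreover have "(-1) ^ (card A * (card A - 1) div 2) * x A = -1 * x A"
    using fun_cong[OF rev, of A] unfolding cl_rev_def cl_smul_def by simp
  hence "(-1::'a) ^ (card A * (card A - 1) div 2) = -1" using nz by (metis mult_right_cancel)
  ultimately show "card A = 3" by (elim disjE) simp_all
qed

lemma four_other_indices:
  "\<exists>a b c d. distinct [i, a, b, c, d] \<and> a < 5 \<and> b < 5 \<and> c < 5 \<and> d < (5::nat)"
proof (cases "i < 4")
  case True
  hence "i = 0 \<or> i = 1 \<or> i = 2 \<or> i = 3" by auto
  thus ?thesis by (elim disjE) (rule exI[of _ "(i + 1) mod 4"], rule exI[of _ "(i + 2) mod 4"],
      rule exI[of _ "(i + 3) mod 4"], rule exI[of _ 4], simp)+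
next
  case False
  thus ?thesis by (intro exI[of _ 0] exI[of _ 1] exI[of _ 2] exI[of _ 3]) auto
qed

text \<open>Each generator is, up to a scalar, the product \<open>e\<^sub>i\<^sub>a\<^sub>b e\<^sub>a\<^sub>c\<^sub>d e\<^sub>b\<^sub>c\<^sub>d\<close> of three basis
  trivectors; this needs five distinct indices.\<close>
lemma generator_eq_smul_trivector_product:
  fixes \<eta> :: "nat \<Rightarrow> 'a::field"
  assumes n: "5 \<le> n" and i: "i < n" and \<eta>: "\<And>j. j < n \<Longrightarrow> \<eta> j \<noteq> 0"
  obtains U1 U2 U3 \<kappa> where "U1 \<in> cl_grade n 3" "U2 \<in> cl_grade n 3" "U3 \<in> cl_grade n 3"
    and "cl_blade {i} = cl_smul \<kappa> (cl_mult n \<eta> (cl_mult n \<eta> U1 U2) U3)"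
proof -
  obtain a b c d where d: "distinct [i, a, b, c, d]" and lt: "a < n" "b < n" "c < n" "d < n"
    using four_other_indices[of i] n by fastforce
  let ?A = "{i, a, b}" and ?B = "{a, c, d}" and ?C = "{b, c, d}" and ?D = "{i, b, c, d}"
  have sub: "?A \<subseteq> {..<n}" "?B \<subseteq> {..<n}" "?C \<subseteq> {..<n}" "?D \<subseteq> {..<n}" using i lt by auto
  have sd: "sym_diff ?A ?B = ?D" "sym_diff ?D ?C = {i}" using d by auto
  define k where "k = blade_coeff \<eta> ?A ?B * blade_coeff \<eta> ?D ?C"
  have prod: "cl_mult n \<eta> (cl_mult n \<eta> (cl_blade ?A) (cl_blade ?B)) (cl_blade ?C) =
      cl_smul k (cl_blade {i})"
    unfolding cl_mult_blade[OF sub(1,2)] sd(1) cl_mult_smul_left cl_mult_blade[OF sub(4,3)]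
      sd(2) k_def
    by (simp add: cl_smul_def mult.assoc)
  have "blade_coeff \<eta> X Y \<noteq> 0" if "X \<subseteq> {..<n}" for X Y
    by (rule blade_coeff_nonzero) (use that \<eta> finite_of_subset_lessThan in auto)
  hence "k \<noteq> 0" unfolding k_def using sub by simp
  hence "cl_blade {i} = cl_smul (inverse k)
      (cl_mult n \<eta> (cl_mult n \<eta> (cl_blade ?A) (cl_blade ?B)) (cl_blade ?C))"
    unfolding prod cl_smul_def by (simp add: mult.assoc[symmetric])
  moreover have "cl_blade ?A \<in> cl_grade n 3" "cl_blade ?B \<in> cl_grade n 3"
    "cl_blade ?C \<in> cl_grade n 3"
    using sub d by (auto intro!: cl_blade_grade)
  ultimately show ?thesis using that by blast
qed

section \<open>Conjugation and the Clifford group of grade 3\<close>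

definition cl_conj :: "nat \<Rightarrow> (nat \<Rightarrow> 'a::comm_ring_1) \<Rightarrow> 'a clf \<Rightarrow> 'a clf \<Rightarrow> 'a clf" where
  "cl_conj n \<eta> T x = cl_mult n \<eta> (cl_mult n \<eta> T x) (cl_inv n \<eta> T)"

lemma cl_Gamma_iff:
  "T \<in> cl_Gamma n \<eta> k \<longleftrightarrow> T \<in> cl_units n \<eta> \<and> (\<forall>U\<in>cl_grade n k. cl_conj n \<eta> T U \<in> cl_grade n k)"
  unfolding cl_Gamma_def cl_conj_def by blast

lemma cl_conj_mult:
  "T \<in> cl_units n \<eta> \<Longrightarrow>
    cl_conj n \<eta> T (cl_mult n \<eta> x y) = cl_mult n \<eta> (cl_conj n \<eta> T x) (cl_conj n \<eta> T y)"
  unfolding cl_conj_def by (simp add: cl_mult_assoc cl_mult_cancel_left cl_mult_inv_left)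

lemma cl_conj_smul: "cl_conj n \<eta> T (cl_smul c x) = cl_smul c (cl_conj n \<eta> T x)"
  unfolding cl_conj_def by (simp add: cl_mult_smul_left cl_mult_smul_right)

definition conj_compatible :: "nat \<Rightarrow> (nat \<Rightarrow> 'a::comm_ring_1) \<Rightarrow> 'a clf \<Rightarrow> 'a clf \<Rightarrow> bool" where
  "conj_compatible n \<eta> T x \<longleftrightarrow>
     cl_involute (cl_conj n \<eta> T x) = cl_conj n \<eta> T (cl_involute x) \<and>
     cl_rev (cl_conj n \<eta> T x) = cl_conj n \<eta> T (cl_rev x)"

lemma conj_compatible_mult:
  assumes "T \<in> cl_units n \<eta>" "conj_compatible n \<eta> T x" "conj_compatible n \<eta> T y"
  shows "conj_compatible n \<eta> T (cl_mult n \<eta> x y)"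
  using assms unfolding conj_compatible_def
  by (simp add: cl_conj_mult cl_involute_mult cl_rev_mult)

lemma conj_compatible_smul:
  "conj_compatible n \<eta> T x \<Longrightarrow> conj_compatible n \<eta> T (cl_smul c x)"
  unfolding conj_compatible_def by (simp add: cl_conj_smul cl_involute_smul cl_rev_smul)

lemma conj_compatible_grade3:
  assumes "T \<in> cl_Gamma n \<eta> 3" "U \<in> cl_grade n 3"
  shows "conj_compatible n \<eta> T U"
proof -
  have "cl_conj n \<eta> T U \<in> cl_grade n 3" using assms unfolding cl_Gamma_iff by blast
  thus ?thesis
    using assms(2) unfolding conj_compatible_def
    by (simp add: cl_involute_grade cl_rev_grade cl_conj_smul)
qed

lemma conj_compatible_generator:
  fixes \<eta> :: "nat \<Rightarrow> 'a::field"
  assumes T: "T \<in> cl_Gamma n \<eta> 3" and "5 \<le> n" "i < n" "\<And>j. j < n \<Longrightarrow> \<eta> j \<noteq> 0"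
  shows "conj_compatible n \<eta> T (cl_blade {i})"
proof -
  obtain U1 U2 U3 \<kappa> where U: "U1 \<in> cl_grade n 3" "U2 \<in> cl_grade n 3" "U3 \<in> cl_grade n 3"
    and e: "cl_blade {i} = cl_smul \<kappa> (cl_mult n \<eta> (cl_mult n \<eta> U1 U2) U3)"
    using generator_eq_smul_trivector_product assms(2-4) by blast
  have "T \<in> cl_units n \<eta>" using T unfolding cl_Gamma_iff by blast
  thus ?thesis
    unfolding e using U T by (intro conj_compatible_smul conj_compatible_mult
      conj_compatible_grade3)
qed

lemma cl_mult_commute_of_conj_eq:
  assumes S: "cl_mult n \<eta> S' S = cl_one" and T: "cl_mult n \<eta> T' T = cl_one"
    and eq: "cl_mult n \<eta> (cl_mult n \<eta> S X) S' = cl_mult n \<eta> (cl_mult n \<eta> T X) T'"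
    and X: "X \<in> cl_carrier n"
  shows "cl_mult n \<eta> (cl_mult n \<eta> S' T) X = cl_mult n \<eta> X (cl_mult n \<eta> S' T)"
proof -
  let ?M = "cl_mult n \<eta>"
  have "?M (?M S' T) X = ?M S' (?M (?M (?M T X) T') T)"
    by (simp only: cl_mult_assoc T) (simp add: cl_mult_one_right X)
  also have "\<dots> = ?M (?M S' S) (?M X (?M S' T))"
    by (simp only: eq[symmetric]) (simp only: cl_mult_assoc)
  also have "\<dots> = ?M X (?M S' T)"
    by (simp add: S cl_mult_one_left)
  finally show ?thesis .
qed

lemma cl_one_center: "(cl_one :: 'a::comm_ring_1 clf) \<in> cl_center n"
proof (cases "even n")
  case False
  have "cl_add cl_one (\<lambda>_. 0) = (cl_one :: 'a clf)" unfolding cl_add_def by simp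
  moreover have "(\<lambda>_. 0 :: 'a) \<in> cl_grade n n" unfolding cl_grade_def cl_carrier_iff by simp
  ultimately show ?thesis unfolding cl_center_def using False cl_one_grade0 by force
qed (simp add: cl_center_def cl_one_grade0)

lemma cl_P_of_even_or_odd:
  assumes "T \<in> cl_units n \<eta>" "T \<in> cl_even n \<or> T \<in> cl_odd n"
  shows "T \<in> cl_P n \<eta>"
proof -
  have "T = cl_mult n \<eta> cl_one T" using assms(1) by (simp add: cl_mult_one_left cl_units_carrier)
  thus ?thesis unfolding cl_P_def using assms cl_one_units cl_one_center by blast
qed

context
  fixes n :: nat and \<eta> :: "nat \<Rightarrow> 'a::field_char_0" and T :: "'a clf"
  assumes T: "T \<in> cl_Gamma n \<eta> 3" and n: "even n" "5 \<le> n" and \<eta>: "\<And>i. i < n \<Longrightarrow> \<eta> i \<noteq> 0"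
begin

lemma cl_Gamma3_units: "T \<in> cl_units n \<eta>"
  using T unfolding cl_Gamma_iff by blast

lemma cl_Gamma3_carrier: "T \<in> cl_carrier n"
  using cl_Gamma3_units by (rule cl_units_carrier)

lemma cl_Gamma3_involute_inv_mult_grade0:
  "cl_mult n \<eta> (cl_involute (cl_inv n \<eta> T)) T \<in> cl_grade n 0"
proof (rule cl_grade0_of_commute_generators[OF _ n(1) \<eta>])
  fix i assume i: "i < n"
  let ?M = "cl_mult n \<eta>" and ?e = "cl_blade {i}" and ?Ti = "cl_inv n \<eta> T"
  have "cl_involute (cl_conj n \<eta> T ?e) = cl_conj n \<eta> T (cl_involute ?e)"
    using conj_compatible_generator[OF T n(2) i \<eta>] unfolding conj_compatible_def by blast
  hence eq: "?M (?M (cl_involute T) ?e) (cl_involute ?Ti) = ?M (?M T ?e) ?Ti"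
    unfolding cl_conj_def cl_involute_mult cl_involute_blade_singleton
    by (simp add: cl_mult_smul_left cl_mult_smul_right cl_smul_minus_one_cancel)
  have inv: "?M (cl_involute ?Ti) (cl_involute T) = cl_one"
    by (simp flip: cl_involute_mult add: cl_mult_inv_left cl_Gamma3_units)
  show "?M (?M (cl_involute ?Ti) T) ?e = ?M ?e (?M (cl_involute ?Ti) T)"
    using i by (intro cl_mult_commute_of_conj_eq[OF inv cl_mult_inv_left[OF cl_Gamma3_units] eq])
      auto
qed simp

lemma cl_Gamma3_rev_mult_grade0: "cl_mult n \<eta> (cl_rev T) T \<in> cl_grade n 0"
proof (rule cl_grade0_of_commute_generators[OF _ n(1) \<eta>])
  fix i assume i: "i < n"
  let ?M = "cl_mult n \<eta>" and ?e = "cl_blade {i}" and ?Ti = "cl_inv n \<eta> T"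
  have "cl_rev (cl_conj n \<eta> T ?e) = cl_conj n \<eta> T (cl_rev ?e)"
    using conj_compatible_generator[OF T n(2) i \<eta>] unfolding conj_compatible_def by blast
  hence eq: "?M (?M (cl_rev ?Ti) ?e) (cl_rev T) = ?M (?M T ?e) ?Ti"
    unfolding cl_conj_def cl_rev_mult cl_rev_blade_singleton by (simp add: cl_mult_assoc)
  have inv: "?M (cl_rev T) (cl_rev ?Ti) = cl_one"
    by (simp flip: cl_rev_mult add: cl_mult_inv_left cl_Gamma3_units)
  show "?M (?M (cl_rev T) T) ?e = ?M ?e (?M (cl_rev T) T)"
    using i by (intro cl_mult_commute_of_conj_eq[OF inv cl_mult_inv_left[OF cl_Gamma3_units] eq])
      auto
qed simp

lemma cl_Gamma3_even_or_odd: "T \<in> cl_even n \<or> T \<in> cl_odd n"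
proof (rule cl_even_or_odd_of_eq_smul_involute)
  let ?c = "cl_mult n \<eta> (cl_involute (cl_inv n \<eta> T)) T"
  have "T = cl_mult n \<eta> (cl_involute T) ?c"
    by (simp flip: cl_mult_assoc cl_involute_mult
        add: cl_mult_inv_right cl_Gamma3_units cl_mult_one_left[OF cl_Gamma3_carrier])
  also have "\<dots> = cl_smul (?c {}) (cl_involute T)"
    by (subst cl_grade0_eq_smul_one[OF cl_Gamma3_involute_inv_mult_grade0])
      (simp add: cl_mult_smul_right cl_mult_one_right cl_Gamma3_carrier)
  finally show "T = cl_smul (?c {}) (cl_involute T)" .
qed (simp_all add: cl_Gamma3_carrier cl_units_nonzero[OF cl_Gamma3_units])

lemma cl_Gamma3_in_Q: "T \<in> cl_Q n \<eta>"
  unfolding cl_Q_def cl_center_even[OF n(1)]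
  using cl_P_of_even_or_odd[OF cl_Gamma3_units cl_Gamma3_even_or_odd] cl_Gamma3_rev_mult_grade0
    cl_mult_units[OF cl_rev_units[OF cl_Gamma3_units] cl_Gamma3_units] by blast

end

lemma cl_P_units: "T \<in> cl_P n \<eta> \<Longrightarrow> T \<in> cl_units n \<eta>"
  unfolding cl_P_def by (auto intro: cl_mult_units)

lemma cl_P_involute:
  assumes "even n" "T \<in> cl_P n \<eta>"
  obtains \<epsilon> where "\<epsilon> * \<epsilon> = 1" "cl_involute T = cl_smul \<epsilon> T"
proof -
  obtain W T' where T: "T = cl_mult n \<eta> W T'" and W: "W \<in> cl_grade n 0"
    and T': "T' \<in> cl_even n \<or> T' \<in> cl_odd n"
    using assms unfolding cl_P_def cl_center_even[OF assms(1)] by blast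
  have W': "cl_involute W = W" using cl_involute_grade[OF W] by (simp add: cl_smul_def)
  from T' show ?thesis
  proof
    assume "T' \<in> cl_even n"
    thus ?thesis using that[of 1] unfolding T cl_involute_mult W'
      by (simp add: cl_involute_even cl_smul_def)
  next
    assume "T' \<in> cl_odd n"
    thus ?thesis using that[of "-1"] unfolding T cl_involute_mult W'
      by (simp add: cl_involute_odd cl_mult_smul_right)
  qed
qed

lemma cl_Q_inv_eq_smul_rev:
  fixes \<eta> :: "nat \<Rightarrow> 'a::field"
  assumes "even n" "T \<in> cl_Q n \<eta>"
  obtains \<gamma> where "cl_inv n \<eta> T = cl_smul \<gamma> (cl_rev T)"
proof -
  have T: "T \<in> cl_units n \<eta>" using assms cl_P_units unfolding cl_Q_def by blast
  let ?c = "cl_mult n \<eta> (cl_rev T) T"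
  have c: "?c \<in> cl_grade n 0" "?c \<in> cl_units n \<eta>"
    using assms unfolding cl_Q_def cl_center_even[OF assms(1)] by auto
  define \<gamma> where "\<gamma> = ?c {}"
  have c_eq: "?c = cl_smul \<gamma> cl_one" unfolding \<gamma>_def by (rule cl_grade0_eq_smul_one[OF c(1)])
  have "\<gamma> \<noteq> 0"
    using cl_units_nonzero[OF c(2)] unfolding c_eq by (auto simp: cl_smul_def)
  have "cl_inv n \<eta> T = cl_smul (inverse \<gamma>) (cl_mult n \<eta> ?c (cl_inv n \<eta> T))"
    using \<open>\<gamma> \<noteq> 0\<close> unfolding c_eq cl_mult_smul_left
    by (simp add: cl_mult_one_left cl_inv_carrier[OF T] cl_smul_def mult.assoc[symmetric])
  also have "\<dots> = cl_smul (inverse \<gamma>) (cl_rev T)"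
    by (simp add: cl_mult_assoc cl_mult_inv_right[OF T] cl_mult_one_right cl_units_carrier[OF T])
  finally have "cl_inv n \<eta> T = cl_smul (inverse \<gamma>) (cl_rev T)" .
  thus ?thesis using that by blast
qed

lemma cl_Q_subset_Gamma3:
  fixes \<eta> :: "nat \<Rightarrow> 'a::field_char_0"
  assumes n: "even n" "n \<le> 6"
  shows "cl_Q n \<eta> \<subseteq> cl_Gamma n \<eta> 3"
proof
  fix T assume TQ: "T \<in> cl_Q n \<eta>"
  hence T: "T \<in> cl_units n \<eta>" using cl_P_units unfolding cl_Q_def by blast
  obtain \<epsilon> where \<epsilon>: "\<epsilon> * \<epsilon> = 1" "cl_involute T = cl_smul \<epsilon> T"
    using cl_P_involute[OF n(1)] TQ unfolding cl_Q_def by blast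
  obtain \<gamma> where inv: "cl_inv n \<eta> T = cl_smul \<gamma> (cl_rev T)"
    using cl_Q_inv_eq_smul_rev[OF n(1) TQ] by blast
  show "T \<in> cl_Gamma n \<eta> 3" unfolding cl_Gamma_iff
  proof (intro conjI ballI T)
    fix U :: "'a clf" assume U: "U \<in> cl_grade n 3"
    let ?X = "cl_mult n \<eta> (cl_mult n \<eta> T U) (cl_rev T)"
    have "cl_involute ?X = cl_smul (\<epsilon> * \<epsilon> * -1) ?X"
      unfolding cl_involute_mult cl_involute_rev \<epsilon>(2) cl_involute_grade[OF U]
      by (simp add: cl_mult_smul_left cl_mult_smul_right cl_rev_smul ac_simps)
    moreover have "cl_rev ?X = cl_smul (-1) ?X"
      unfolding cl_rev_mult cl_rev_grade[OF U]
      by (simp add: cl_mult_smul_left cl_mult_smul_right cl_mult_assoc)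
    ultimately have "?X \<in> cl_grade n 3"
      using \<epsilon>(1) by (intro cl_grade3_of_involute_rev n(2)) simp_all
    thus "cl_conj n \<eta> T U \<in> cl_grade n 3"
      unfolding cl_conj_def inv cl_mult_smul_right by (rule cl_smul_grade)
  qed
qed

section \<open>The example 1 + 2 e_123456\<close>

lemma blade_coeff_self_square:
  assumes "finite A" "\<And>i. i \<in> A \<Longrightarrow> \<eta> i * \<eta> i = 1"
  shows "blade_coeff \<eta> A A * blade_coeff \<eta> A A = (1 :: 'a::comm_ring_1)"
proof -
  have "(\<Prod>k\<in>A. \<eta> k) * (\<Prod>k\<in>A. \<eta> k) = 1"
    using assms(2) by (simp add: prod.distrib[symmetric])
  moreover have "pair_sign A A * pair_sign A A = (1::'a)" by (rule pair_sign_square)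
  ultimately have "(pair_sign A A * pair_sign A A) * ((\<Prod>k\<in>A. \<eta> k) * (\<Prod>k\<in>A. \<eta> k)) = (1::'a)"
    by simp
  thus ?thesis
    unfolding blade_coeff_def blade_sign_eq_pair_sign[OF assms(1) assms(1)] Int_absorb
    by (simp only: mult_ac)
qed

abbreviation pseudoscalar6 :: "'a::comm_ring_1 clf" where
  "pseudoscalar6 \<equiv> cl_blade {0..<6}"

abbreviation example6 :: "'a::comm_ring_1 clf" where
  "example6 \<equiv> cl_add cl_one (cl_smul 2 pseudoscalar6)"

abbreviation example6_rev :: "'a::comm_ring_1 clf" where
  "example6_rev \<equiv> cl_add cl_one (cl_smul (-2) pseudoscalar6)"

lemma cl_rev_pseudoscalar6:
  "cl_rev pseudoscalar6 = cl_smul (-1) (pseudoscalar6 :: 'a::comm_ring_1 clf)"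
  by (subst cl_rev_grade[OF cl_blade_grade]) auto

lemma cl_rev_example6: "cl_rev example6 = (example6_rev :: 'a::comm_ring_1 clf)"
  unfolding cl_rev_add cl_rev_smul cl_rev_pseudoscalar6 by simp

lemma blade_coeff_pseudoscalar6_generator0:
  "blade_coeff \<eta> {0..<6} {0} = - \<eta> 0" "blade_coeff \<eta> {0} {0..<6} = (\<eta> 0 :: 'a::comm_ring_1)"
proof -
  have I: "{0..<6::nat} = {0, 1, 2, 3, 4, 5}" by auto
  have "{0..<6::nat} \<inter> {0} = {0}" "{0} \<inter> {0..<6::nat} = {0}" "finite {0::nat}" by auto
  thus "blade_coeff \<eta> {0..<6} {0} = - \<eta> 0" "blade_coeff \<eta> {0} {0..<6} = \<eta> 0"
    unfolding blade_coeff_def by (simp_all add: blade_sign_eq_pair_sign pair_sign_def I inversion_sign_def)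
qed

lemma pseudoscalar6_carrier [simp]: "pseudoscalar6 \<in> cl_carrier 6"
  by (rule cl_blade_carrier) auto

context
  fixes \<eta> :: "nat \<Rightarrow> 'a::field_char_0"
  assumes \<eta>: "\<And>i. i < 6 \<Longrightarrow> \<eta> i * \<eta> i = 1"
begin

definition example6_norm :: 'a where
  "example6_norm = 1 - 4 * blade_coeff \<eta> {0..<6} {0..<6}"

lemma example6_norm_nonzero: "example6_norm \<noteq> 0"
proof
  let ?\<mu> = "blade_coeff \<eta> {0..<6} {0..<6}"
  assume "example6_norm = 0"
  hence "(4 * ?\<mu>) * (4 * ?\<mu>) = 1" unfolding example6_norm_def by (simp add: algebra_simps)
  hence "16 * (?\<mu> * ?\<mu>) = 1" by (simp add: ac_simps)
  moreover have "?\<mu> * ?\<mu> = 1" using \<eta> by (intro blade_coeff_self_square) auto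
  ultimately show False by simp
qed

lemma example6_rev_mult: "cl_mult 6 \<eta> example6_rev example6 = cl_smul example6_norm cl_one"
  and example6_mult_rev: "cl_mult 6 \<eta> example6 example6_rev = cl_smul example6_norm cl_one"
proof -
  have "cl_mult 6 \<eta> pseudoscalar6 pseudoscalar6 = cl_smul (blade_coeff \<eta> {0..<6} {0..<6}) cl_one"
    by (subst cl_mult_blade) (auto simp: cl_blade_def cl_one_def)
  thus "cl_mult 6 \<eta> example6_rev example6 = cl_smul example6_norm cl_one"
    "cl_mult 6 \<eta> example6 example6_rev = cl_smul example6_norm cl_one"
    unfolding cl_mult_add_left cl_mult_add_right cl_mult_smul_left cl_mult_smul_right
      example6_norm_def
    by (simp_all add: cl_mult_one_left cl_mult_one_right fun_eq_iff cl_add_def cl_smul_def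
      algebra_simps)
qed

lemma example6_units: "example6 \<in> cl_units 6 \<eta>"
  and example6_inv: "cl_inv 6 \<eta> example6 = cl_smul (inverse example6_norm) example6_rev"
proof -
  show unit: "example6 \<in> cl_units 6 \<eta>"
    by (rule cl_unitsI[of _ _ "cl_smul (inverse example6_norm) example6_rev"])
      (use example6_norm_nonzero in \<open>simp_all add: cl_mult_smul_left cl_mult_smul_right
        example6_rev_mult example6_mult_rev\<close>)
  show "cl_inv 6 \<eta> example6 = cl_smul (inverse example6_norm) example6_rev"
    by (rule cl_inv_unique[OF unit])
      (use example6_norm_nonzero in \<open>simp_all add: cl_mult_smul_right example6_mult_rev\<close>)
qed

lemma example6_in_Q: "example6 \<in> cl_Q 6 \<eta>"
  unfolding cl_Q_def
proof (intro CollectI conjI)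
  have "example6 \<in> cl_even 6"
    unfolding cl_even_def by (auto simp: cl_add_def cl_smul_def cl_blade_def cl_one_def
      cl_carrier_iff)
  thus "example6 \<in> cl_P 6 \<eta>" by (intro cl_P_of_even_or_odd example6_units disjI1)
  show "cl_mult 6 \<eta> (cl_rev example6) example6 \<in> cl_units 6 \<eta> \<inter> cl_center 6"
    unfolding cl_rev_example6 example6_rev_mult cl_center_even[of 6, simplified]
    using cl_smul_grade[OF cl_one_grade0] cl_smul_one_units[OF example6_norm_nonzero] by simp
qed

text \<open>The coefficient of \<open>e\<^sub>1\<^sub>2\<^sub>3\<^sub>4\<^sub>5\<close> in the conjugate of \<open>e\<^sub>0\<close> is \<open>-4 \<eta>\<^sub>0 / example6_norm\<close>,
  because the pseudoscalar anticommutes with \<open>e\<^sub>0\<close>.\<close>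
lemma example6_not_in_Gamma1: "example6 \<notin> cl_Gamma 6 \<eta> 1"
proof
  assume G: "example6 \<in> cl_Gamma 6 \<eta> 1"
  let ?J = "{1, 2, 3, 4, 5 :: nat}" and ?M = "cl_mult 6 \<eta>"
  let ?e = "cl_blade {0} :: 'a clf" and ?f = "cl_blade ?J :: 'a clf"
  have sub: "{0} \<subseteq> {..<6::nat}" "?J \<subseteq> {..<6}" "{0..<6} \<subseteq> {..<6::nat}" by auto
  hence carrier: "?e \<in> cl_carrier 6" "?f \<in> cl_carrier 6" by simp_all
  have "?e \<in> cl_grade 6 1" by (rule cl_blade_grade) auto
  hence grade1: "cl_conj 6 \<eta> example6 ?e \<in> cl_grade 6 1" using G unfolding cl_Gamma_iff by blast
  have "sym_diff {0..<6} {0} = ?J" "sym_diff {0} {0..<6} = ?J" "sym_diff ?J {0..<6} = {0}"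
    by auto
  hence prods: "?M pseudoscalar6 ?e = cl_smul (- \<eta> 0) ?f" "?M ?e pseudoscalar6 = cl_smul (\<eta> 0) ?f"
    "?M ?f pseudoscalar6 = cl_smul (blade_coeff \<eta> ?J {0..<6}) ?e"
    using cl_mult_blade[OF sub(3,1)] cl_mult_blade[OF sub(1,3)] cl_mult_blade[OF sub(2,3)]
    by (simp_all add: blade_coeff_pseudoscalar6_generator0)
  have "cl_conj 6 \<eta> example6 ?e ?J = inverse example6_norm * (- 4 * \<eta> 0)"
    unfolding cl_conj_def example6_inv
    by (simp only: cl_mult_add_left cl_mult_add_right cl_mult_smul_left cl_mult_smul_right prods
        cl_mult_one_left[OF carrier(1)] cl_mult_one_right[OF carrier(1)] cl_mult_one_right[OF carrier(2)])
      (simp add: cl_add_def cl_smul_def cl_blade_def algebra_simps)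
  also have "\<dots> \<noteq> 0" using example6_norm_nonzero \<eta>[of 0] by auto
  finally have "card ?J = 1" using grade1 unfolding cl_grade_def by blast
  thus False by simp
qed

end

lemma cl_Gamma3_eq_Q_6:
  fixes \<eta> :: "nat \<Rightarrow> 'a::field_char_0"
  assumes "\<And>i. i < 6 \<Longrightarrow> \<eta> i \<noteq> 0"
  shows "cl_Gamma 6 \<eta> 3 = cl_Q 6 \<eta>"
  using cl_Gamma3_in_Q[of _ 6 \<eta>] cl_Q_subset_Gamma3[of 6 \<eta>] assms by auto

lemma cl_Gamma3_eq_Q_6_and_example6:
  fixes \<eta> :: "nat \<Rightarrow> 'a::field_char_0"
  assumes \<eta>: "\<And>i. i < 6 \<Longrightarrow> \<eta> i * \<eta> i = 1"
  shows "cl_Gamma 6 \<eta> 3 = cl_Q 6 \<eta> \<and> cl_Gamma 6 \<eta> 1 \<noteq> cl_Gamma 6 \<eta> 3 \<and>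
    example6 \<in> cl_Gamma 6 \<eta> 3 \<and> example6 \<notin> cl_Gamma 6 \<eta> 1"
proof -
  have "cl_Gamma 6 \<eta> 3 = cl_Q 6 \<eta>" using \<eta> by (intro cl_Gamma3_eq_Q_6) fastforce
  thus ?thesis using example6_in_Q[of \<eta>, OF \<eta>] example6_not_in_Gamma1[of \<eta>, OF \<eta>] by blast
qed

theorem mainTheorem17:
  shows "(\<forall>p q :: nat. p + q = 6 \<longrightarrow>
           (let \<eta> = sig_metric p q;
                T = cl_add cl_one (cl_smul 2 (cl_blade {0..<6})) :: real clf
            in cl_Gamma 6 \<eta> 3 = cl_Q 6 \<eta> \<and> cl_Gamma 6 \<eta> 1 \<noteq> cl_Gamma 6 \<eta> 3 \<and>
               T \<in> cl_Gamma 6 \<eta> 3 \<and> T \<notin> cl_Gamma 6 \<eta> 1))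
       \<and> (let \<eta> = (\<lambda>_. 1) :: nat \<Rightarrow> complex;
               T = cl_add cl_one (cl_smul 2 (cl_blade {0..<6})) :: complex clf
           in cl_Gamma 6 \<eta> 3 = cl_Q 6 \<eta> \<and> cl_Gamma 6 \<eta> 1 \<noteq> cl_Gamma 6 \<eta> 3 \<and>
              T \<in> cl_Gamma 6 \<eta> 3 \<and> T \<notin> cl_Gamma 6 \<eta> 1)"
proof (intro conjI allI impI)
  fix p q :: nat assume "p + q = 6"
  hence "sig_metric p q i * sig_metric p q i = 1" if "i < 6" for i
    using that unfolding sig_metric_def by auto
  thus "let \<eta> = sig_metric p q; T = cl_add cl_one (cl_smul 2 (cl_blade {0..<6})) :: real clf
    in cl_Gamma 6 \<eta> 3 = cl_Q 6 \<eta> \<and> cl_Gamma 6 \<eta> 1 \<noteq> cl_Gamma 6 \<eta> 3 \<and>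
       T \<in> cl_Gamma 6 \<eta> 3 \<and> T \<notin> cl_Gamma 6 \<eta> 1"
    unfolding Let_def by (rule cl_Gamma3_eq_Q_6_and_example6)
qed (unfold Let_def, rule cl_Gamma3_eq_Q_6_and_example6, simp)

end
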